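(* Let $(A,B)$ be a Katsura pair. Then the KEP-action $(G_B,E_A)$ is regular if and only if $(G_{B,\infty},E_{A_\infty})$ and $(G_{B_{<\infty}},E_{A_{<\infty}})$ are regular.
   Context: Katsura pair: $N\in\mathbb{N}$, $A\in M_N(\mathbb{N})$ (nonnegative integers), $B\in M_N(\mathbb{Z})$ with $A_{ij}=0\Rightarrow B_{ij}=0$. Graph $E_A$: vertices $\{1,\dots,N\}$, edges $e_{i,j,m}$ ($0\le m<A_{ij}$), $r=i$, $s=j$; $B_e=B_{r(e)s(e)}$. The group bundle $\mathbb{Z}\times E_A^0$ (elements $a_i^k$) acts by $a_i^k\cdot e_{i,j,m}=e_{i,j,\hat m}$, $a_i^k|_{e_{i,j,m}}=a_j^{\hat k}$, $kB_{ij}+m=\hat kA_{ij}+\hat m$, $0\le\hat m<A_{ij}$, extended recursively to finite paths; $G_B$ is the faithful quotient, $(G_B,E_A)$ the KEP-action, $(G_B)_i$ its isotropy group at $i$. $E^0_{A,\infty}=\{i:(G_B)_i\text{ infinite}\}$, $E^0_{A,<\infty}$ its complement. $E_{A_\infty}$: subgraph with vertices $E^0_{A,\infty}$ and edges $\{e:s(e)\in E^0_{A,\infty},B_e\ne0\}$ (adjacency matrix $A_\infty$); $G_{B,\infty}=\{g\in G_B:d(g)\in E^0_{A,\infty}\}=\mathbb{Z}\times E^0_{A,\infty}$ acting on $E_{A_\infty}$ by the restricted KEP formulas (an action-restriction pair, possibly non-faithful). $E_{A_{<\infty}}$: subgraph with vertices $E^0_{A,<\infty}$ and edges $\{e:r(e)\in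 E^0_{A,<\infty},B_e\ne0\}$, adjacency matrix $A_{<\infty}$; $B_{<\infty}$ is $B$ restricted to indices in $E^0_{A,<\infty}$; $(G_{B_{<\infty}},E_{A_{<\infty}})$ is the KEP-action of the Katsura pair $(A_{<\infty},B_{<\infty})$ (equal to the restriction of $G_B$ to $E^0_{A,<\infty}$). Regular (for an action-restriction pair $(G,E)$): for every $g\in G$ there is $K\in\mathbb{N}$ such that $g\cdot\mu=\mu$ and $|\mu|\ge K$ imply $g|_\mu$ is the unit at $s(\mu)$. *)

theory Defs
  imports Main
begin

text \<open>Edges of E_A are triples (i,j,m) standing for e_{i,j,m}, with range r = i and
source s = j.  Finite paths are lists of edges mu = e_1 e_2 ... with s(e_k) = r(e_{k+1});
the empty list is the length-0 path at a vertex (the vertex is carried separately).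
An element a_i^k of the group bundle Z x E^0 is represented by the pair (k, i).\<close>

type_synonym edge = "nat \<times> nat \<times> nat"

definition katsura_pair :: "nat \<Rightarrow> (nat \<Rightarrow> nat \<Rightarrow> nat) \<Rightarrow> (nat \<Rightarrow> nat \<Rightarrow> int) \<Rightarrow> bool" where
  "katsura_pair N A B \<longleftrightarrow> (\<forall>i\<in>{1..N}. \<forall>j\<in>{1..N}. A i j = 0 \<longrightarrow> B i j = 0)"

definition kep_edges :: "nat set \<Rightarrow> (nat \<Rightarrow> nat \<Rightarrow> nat) \<Rightarrow> edge set" where
  "kep_edges V A = {(i, j, m). i \<in> V \<and> j \<in> V \<and> m < A i j}"

definition path_in :: "edge set \<Rightarrow> nat \<Rightarrow> edge list \<Rightarrow> bool" where
  "path_in Ed v mu \<longleftrightarrow> (\<forall>e\<in>set mu. e \<in> Ed) \<and> (mu \<noteq> [] \<longrightarrow> fst (hd mu) = v)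
     \<and> (\<forall>n. Suc n < length mu \<longrightarrow> fst (snd (mu ! n)) = fst (mu ! Suc n))"

text \<open>The KEP formulas: kB_{ij} + m = k' A_{ij} + m', 0 <= m' < A_{ij},
  a_i^k . e_{i,j,m} = e_{i,j,m'} and a_i^k|_{e_{i,j,m}} = a_j^{k'}, extended recursively.\<close>
fun kep_act :: "(nat \<Rightarrow> nat \<Rightarrow> nat) \<Rightarrow> (nat \<Rightarrow> nat \<Rightarrow> int) \<Rightarrow> int \<Rightarrow> edge list \<Rightarrow> edge list" where
  "kep_act A B k [] = []"
| "kep_act A B k ((i, j, m) # mu) =
     (i, j, nat ((k * B i j + int m) mod int (A i j)))
       # kep_act A B ((k * B i j + int m) div int (A i j)) mu"

fun kep_restr :: "(nat \<Rightarrow> nat \<Rightarrow> nat) \<Rightarrow> (nat \<Rightarrow> nat \<Rightarrow> int) \<Rightarrow> int \<Rightarrow> nat \<Rightarrow> edge list \<Rightarrow> int \<times> nat" where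
  "kep_restr A B k v [] = (k, v)"
| "kep_restr A B k v ((i, j, m) # mu) =
     kep_restr A B ((k * B i j + int m) div int (A i j)) j mu"

text \<open>In the faithful quotient G_B, the class of a_j^k is the unit at j iff a_j^k acts
  trivially on all finite paths with range j.\<close>
definition acts_trivially :: "edge set \<Rightarrow> (nat \<Rightarrow> nat \<Rightarrow> nat) \<Rightarrow> (nat \<Rightarrow> nat \<Rightarrow> int) \<Rightarrow> int \<times> nat \<Rightarrow> bool" where
  "acts_trivially Ed A B g \<longleftrightarrow> (\<forall>nu. path_in Ed (snd g) nu \<longrightarrow> kep_act A B (fst g) nu = nu)"

text \<open>Regularity of the KEP-action (G_B, E_A) of a Katsura pair with vertex set V
  (G_B the faithful quotient; every element of G_B is the class of some a_i^k).\<close>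
definition kep_regular :: "nat set \<Rightarrow> (nat \<Rightarrow> nat \<Rightarrow> nat) \<Rightarrow> (nat \<Rightarrow> nat \<Rightarrow> int) \<Rightarrow> bool" where
  "kep_regular V A B \<longleftrightarrow>
     (\<forall>i\<in>V. \<forall>k::int. \<exists>K::nat. \<forall>mu.
        path_in (kep_edges V A) i mu \<and> kep_act A B k mu = mu \<and> length mu \<ge> K
          \<longrightarrow> acts_trivially (kep_edges V A) A B (kep_restr A B k i mu))"

text \<open>Isotropy group (G_B)_i: the classes of the a_i^k, i.e. their actions on paths with range i.\<close>
definition kep_isotropy :: "nat set \<Rightarrow> (nat \<Rightarrow> nat \<Rightarrow> nat) \<Rightarrow> (nat \<Rightarrow> nat \<Rightarrow> int) \<Rightarrow> nat
    \<Rightarrow> (edge list \<Rightarrow> edge list) set" where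
  "kep_isotropy V A B i =
     (\<lambda>k. \<lambda>mu. if path_in (kep_edges V A) i mu then kep_act A B k mu else []) ` UNIV"

definition V_inf :: "nat \<Rightarrow> (nat \<Rightarrow> nat \<Rightarrow> nat) \<Rightarrow> (nat \<Rightarrow> nat \<Rightarrow> int) \<Rightarrow> nat set" where
  "V_inf N A B = {i \<in> {1..N}. infinite (kep_isotropy {1..N} A B i)}"

definition V_fin :: "nat \<Rightarrow> (nat \<Rightarrow> nat \<Rightarrow> nat) \<Rightarrow> (nat \<Rightarrow> nat \<Rightarrow> int) \<Rightarrow> nat set" where
  "V_fin N A B = {1..N} - V_inf N A B"

definition edges_inf :: "nat \<Rightarrow> (nat \<Rightarrow> nat \<Rightarrow> nat) \<Rightarrow> (nat \<Rightarrow> nat \<Rightarrow> int) \<Rightarrow> edge set" where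
  "edges_inf N A B = {e \<in> kep_edges {1..N} A. fst (snd e) \<in> V_inf N A B \<and> B (fst e) (fst (snd e)) \<noteq> 0}"

text \<open>Regularity of the action-restriction pair (G_{B,infty}, E_{A_infty}), where
  G_{B,infty} = Z x E^0_{A,infty} (not necessarily faithful); the unit at j is a_j^0.\<close>
definition inf_regular :: "nat \<Rightarrow> (nat \<Rightarrow> nat \<Rightarrow> nat) \<Rightarrow> (nat \<Rightarrow> nat \<Rightarrow> int) \<Rightarrow> bool" where
  "inf_regular N A B \<longleftrightarrow>
     (\<forall>i\<in>V_inf N A B. \<forall>k::int. \<exists>K::nat. \<forall>mu.
        path_in (edges_inf N A B) i mu \<and> kep_act A B k mu = mu \<and> length mu \<ge> K
          \<longrightarrow> fst (kep_restr A B k i mu) = 0)"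

text \<open>The Katsura pair (A_{<infty}, B_{<infty}) on the index set E^0_{A,<infty}.
  A_{<infty} is the adjacency matrix of E_{A_{<infty}} (edges with B_e /= 0).\<close>
definition A_fin :: "nat \<Rightarrow> (nat \<Rightarrow> nat \<Rightarrow> nat) \<Rightarrow> (nat \<Rightarrow> nat \<Rightarrow> int) \<Rightarrow> nat \<Rightarrow> nat \<Rightarrow> nat" where
  "A_fin N A B i j =
     (if i \<in> V_fin N A B \<and> j \<in> V_fin N A B \<and> B i j \<noteq> 0 then A i j else 0)"

definition B_fin :: "nat \<Rightarrow> (nat \<Rightarrow> nat \<Rightarrow> nat) \<Rightarrow> (nat \<Rightarrow> nat \<Rightarrow> int) \<Rightarrow> nat \<Rightarrow> nat \<Rightarrow> int" where
  "B_fin N A B i j = (if i \<in> V_fin N A B \<and> j \<in> V_fin N A B then B i j else 0)"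

end

theory Submission
  imports Defs
begin

(* For a vertex j the exponents k for which a_j^k acts trivially form a subgroup d_j Z of Z,
   and (G_B)_j is infinite exactly when d_j = 0.  Hence on a vertex with finite isotropy only the
   finitely many residues 0 <= r < d_j matter, which turns regularity of the finite part into a
   bound that is uniform over all of E^0_{A,<infty}; moreover paths leave that part only through
   edges with B_e = 0, after which every restriction is trivial.  A path starting at an infinite
   vertex runs inside E_{A_infty}, where a restriction is trivial only if its exponent vanishes,
   until it meets an edge with B_e = 0 or enters the finite part; adding the two bounds gives
   regularity of G_B.  Conversely, both subsystems inherit the bounds of G_B. *)

lemma path_in_Nil [simp]: "path_in Ed v []"
  by (simp add: path_in_def)

lemma path_in_Cons:
  "path_in Ed v (e # mu) \<longleftrightarrow> e \<in> Ed \<and> fst e = v \<and> path_in Ed (fst (snd e)) mu"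
proof -
  have "(\<forall>n. Suc n < length (e # mu) \<longrightarrow> fst (snd ((e # mu) ! n)) = fst ((e # mu) ! Suc n)) \<longleftrightarrow>
      (mu \<noteq> [] \<longrightarrow> fst (hd mu) = fst (snd e)) \<and>
      (\<forall>n. Suc n < length mu \<longrightarrow> fst (snd (mu ! n)) = fst (mu ! Suc n))"
    by (cases mu) (auto simp: All_less_Suc2 hd_conv_nth)
  then show ?thesis
    by (auto simp: path_in_def)
qed

lemma path_in_ConsE:
  assumes "path_in Ed i mu" and "mu \<noteq> []"
  obtains j m mu' where "mu = (i, j, m) # mu'" and "(i, j, m) \<in> Ed" and "path_in Ed j mu'"
  using assms by (cases mu) (auto simp: path_in_Cons)

lemma path_in_mono: "path_in Ed v mu \<Longrightarrow> Ed \<subseteq> Ed' \<Longrightarrow> path_in Ed' v mu"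
  by (auto simp: path_in_def)

lemma path_in_edges: "path_in Ed v mu \<Longrightarrow> set mu \<subseteq> Ed"
  by (auto simp: path_in_def)

lemma snd_kep_restr: "snd (kep_restr A B k v mu) = (if mu = [] then v else fst (snd (last mu)))"
  by (induction A B k v mu rule: kep_restr.induct) auto

lemma kep_restr_target_in:
  assumes "path_in Ed v mu" and "v \<in> W" and "\<forall>e\<in>Ed. fst (snd e) \<in> W"
  shows "snd (kep_restr A B k v mu) \<in> W"
  using assms by (auto simp: snd_kep_restr path_in_def)

lemma kep_act_zero: "set mu \<subseteq> kep_edges V A \<Longrightarrow> kep_act A B 0 mu = mu"
  by (induction A B "0::int" mu rule: kep_act.induct) (auto simp: kep_edges_def)

lemma kep_restr_zero: "set mu \<subseteq> kep_edges V A \<Longrightarrow> fst (kep_restr A B 0 v mu) = 0"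
  by (induction A B "0::int" v mu rule: kep_restr.induct) (auto simp: kep_edges_def)

lemma kep_restr_zero_if_B_zero:
  assumes "set mu \<subseteq> kep_edges V A" and "(a, b, c) \<in> set mu" and "B a b = 0"
  shows "fst (kep_restr A B k v mu) = 0"
  using assms
proof (induction A B k v mu rule: kep_restr.induct)
  case (2 A B k v i j m mu)
  then show ?case
    by (cases "(a, b, c) = (i, j, m)") (auto simp: kep_edges_def kep_restr_zero)
qed simp

lemma mod_div_add_mult:
  fixes a b k l x :: int
  assumes "a > 0"
  shows "((k + l) * b + x) mod a = (k * b + (l * b + x) mod a) mod a"
    and "((k + l) * b + x) div a = (k * b + (l * b + x) mod a) div a + (l * b + x) div a"
proof -
  have eq: "(k + l) * b + x = (k * b + (l * b + x) mod a) + ((l * b + x) div a) * a"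
    by (simp add: algebra_simps)
  show "((k + l) * b + x) mod a = (k * b + (l * b + x) mod a) mod a"
    by (simp add: mod_add_right_eq algebra_simps)
  have "((k + l) * b + x) div a = (k * b + (l * b + x) mod a + ((l * b + x) div a) * a) div a"
    by (subst eq) (rule refl)
  also have "\<dots> = (l * b + x) div a + (k * b + (l * b + x) mod a) div a"
    using assms by (intro div_mult_self1) simp
  also have "\<dots> = (k * b + (l * b + x) mod a) div a + (l * b + x) div a"
    by (rule add.commute)
  finally show "((k + l) * b + x) div a = (k * b + (l * b + x) mod a) div a + (l * b + x) div a" .
qed

lemma kep_act_add:
  "set mu \<subseteq> kep_edges V A \<Longrightarrow> kep_act A B (k + l) mu = kep_act A B k (kep_act A B l mu)"
proof (induction mu arbitrary: k l)
  case (Cons e mu)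
  obtain i j m where e: "e = (i, j, m)" by (cases e)
  then have "int (A i j) > 0" using Cons.prems by (auto simp: kep_edges_def)
  then show ?case
    using Cons e mod_div_add_mult[of "int (A i j)" k l "B i j" "int m"] by simp
qed simp

lemma kep_restr_add:
  "set mu \<subseteq> kep_edges V A \<Longrightarrow> fst (kep_restr A B (k + l) v mu)
     = fst (kep_restr A B k v (kep_act A B l mu)) + fst (kep_restr A B l v mu)"
proof (induction mu arbitrary: k l v)
  case (Cons e mu)
  obtain i j m where e: "e = (i, j, m)" by (cases e)
  then have "int (A i j) > 0" using Cons.prems by (auto simp: kep_edges_def)
  then show ?case
    using Cons e mod_div_add_mult[of "int (A i j)" k l "B i j" "int m"] by simp
qed simp

lemma kep_act_cong:
  "\<forall>(i, j, m)\<in>set mu. A' i j = A i j \<and> B' i j = B i j \<Longrightarrow> kep_act A' B' k mu = kep_act A B k mu"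
  by (induction A B k mu rule: kep_act.induct) auto

lemma kep_restr_cong:
  "\<forall>(i, j, m)\<in>set mu. A' i j = A i j \<and> B' i j = B i j \<Longrightarrow> kep_restr A' B' k v mu = kep_restr A B k v mu"
  by (induction A B k v mu rule: kep_restr.induct) auto

lemma acts_trivially_zero: "fst g = 0 \<Longrightarrow> acts_trivially (kep_edges V A) A B g"
  by (auto simp: acts_trivially_def kep_act_zero dest: path_in_edges)

lemma acts_trivially_add:
  assumes "acts_trivially (kep_edges V A) A B (k, j)" and "acts_trivially (kep_edges V A) A B (l, j)"
  shows "acts_trivially (kep_edges V A) A B (k + l, j)"
  using assms by (auto simp: acts_trivially_def kep_act_add[OF path_in_edges])

lemma acts_trivially_diff_iff:
  "acts_trivially (kep_edges V A) A B (k - l, i) \<longleftrightarrow>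
     (\<forall>nu. path_in (kep_edges V A) i nu \<longrightarrow> kep_act A B k nu = kep_act A B l nu)"
proof (intro iffI allI impI)
  fix nu assume triv: "acts_trivially (kep_edges V A) A B (k - l, i)"
    and nu: "path_in (kep_edges V A) i nu"
  have "kep_act A B k nu = kep_act A B l (kep_act A B (k - l) nu)"
    using kep_act_add[OF path_in_edges[OF nu], of B l "k - l"] by simp
  then show "kep_act A B k nu = kep_act A B l nu"
    using triv nu by (simp add: acts_trivially_def)
next
  assume eq: "\<forall>nu. path_in (kep_edges V A) i nu \<longrightarrow> kep_act A B k nu = kep_act A B l nu"
  show "acts_trivially (kep_edges V A) A B (k - l, i)"
    unfolding acts_trivially_def
  proof (intro allI impI)
    fix nu assume nu: "path_in (kep_edges V A) (snd (k - l, i)) nu"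
    then have edges: "set nu \<subseteq> kep_edges V A"
      by (simp add: path_in_edges)
    have "kep_act A B (k - l) nu = kep_act A B (- l) (kep_act A B k nu)"
      using kep_act_add[OF edges, of B "- l" k] by simp
    also have "\<dots> = kep_act A B (- l) (kep_act A B l nu)"
      using eq nu by simp
    also have "\<dots> = nu"
      using kep_act_add[OF edges, of B "- l" l] kep_act_zero[OF edges] by simp
    finally show "kep_act A B (fst (k - l, i)) nu = nu" by simp
  qed
qed

lemma acts_trivially_uminus:
  assumes "acts_trivially (kep_edges V A) A B (k, j)"
  shows "acts_trivially (kep_edges V A) A B (- k, j)"
  using acts_trivially_diff_iff[of V A B 0 k j] assms
  by (simp add: acts_trivially_def kep_act_zero[OF path_in_edges])

lemma acts_trivially_mult:
  assumes "acts_trivially (kep_edges V A) A B (d, j)"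
  shows "acts_trivially (kep_edges V A) A B (d * t, j)"
proof (induction t rule: int_induct[where k = 0])
  case base
  show ?case by (simp add: acts_trivially_zero)
next
  case (step1 i)
  then show ?case using acts_trivially_add[OF step1(2) assms] by (simp add: distrib_left)
next
  case (step2 i)
  then show ?case using acts_trivially_add[OF step2(2) acts_trivially_uminus[OF assms]]
    by (simp add: right_diff_distrib)
qed

lemma acts_trivially_restr:
  assumes "acts_trivially (kep_edges V A) A B (k, v)" and "path_in (kep_edges V A) v mu"
  shows "acts_trivially (kep_edges V A) A B (kep_restr A B k v mu)"
  using assms
proof (induction mu arbitrary: k v)
  case (Cons e mu)
  obtain j m where e: "e = (v, j, m)" and edge: "(v, j, m) \<in> kep_edges V A"
    and mu: "path_in (kep_edges V A) j mu"
    using Cons.prems(2) by (auto elim: path_in_ConsE)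
  have "acts_trivially (kep_edges V A) A B ((k * B v j + int m) div int (A v j), j)"
    unfolding acts_trivially_def
  proof (intro allI impI)
    fix nu assume "path_in (kep_edges V A) (snd ((k * B v j + int m) div int (A v j), j)) nu"
    then have "path_in (kep_edges V A) v ((v, j, m) # nu)"
      using edge by (simp add: path_in_Cons)
    then show "kep_act A B (fst ((k * B v j + int m) div int (A v j), j)) nu = nu"
      using Cons.prems(1) unfolding acts_trivially_def by fastforce
  qed
  then show ?case using Cons.IH mu e by simp
qed simp

lemma acts_trivially_restr_add:
  assumes "set mu \<subseteq> kep_edges V A" and "kep_act A B l mu = mu"
    and "acts_trivially (kep_edges V A) A B (kep_restr A B k v mu)"
    and "acts_trivially (kep_edges V A) A B (kep_restr A B l v mu)"
  shows "acts_trivially (kep_edges V A) A B (kep_restr A B (k + l) v mu)"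
proof -
  define w where "w = (if mu = [] then v else fst (snd (last mu)))"
  have "kep_restr A B c v mu = (fst (kep_restr A B c v mu), w)" for c
    by (simp add: prod_eq_iff snd_kep_restr w_def)
  moreover have "fst (kep_restr A B (k + l) v mu) = fst (kep_restr A B k v mu) + fst (kep_restr A B l v mu)"
    using kep_restr_add[OF assms(1), of B k l v] assms(2) by simp
  ultimately show ?thesis
    using acts_trivially_add assms(3,4) by metis
qed

lemma finite_kep_isotropy_of_period:
  assumes period: "acts_trivially (kep_edges V A) A B (d, i)" and "d > 0"
  shows "finite (kep_isotropy V A B i)"
proof -
  define f where "f k = (\<lambda>mu. if path_in (kep_edges V A) i mu then kep_act A B k mu else [])" for k
  have f_mod: "f k = f (k mod d)" for k
  proof
    fix mu
    have "acts_trivially (kep_edges V A) A B (k - k mod d, i)"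
      unfolding minus_mod_eq_mult_div using period by (rule acts_trivially_mult)
    then show "f k mu = f (k mod d) mu"
      unfolding acts_trivially_diff_iff f_def by simp
  qed
  have "range f \<subseteq> f ` {0..<d}"
  proof (rule image_subsetI)
    fix k
    have "k mod d \<in> {0..<d}"
      using \<open>d > 0\<close> by simp
    then show "f k \<in> f ` {0..<d}"
      unfolding f_mod[of k] by (rule imageI)
  qed
  moreover have "kep_isotropy V A B i = range f"
    by (simp add: kep_isotropy_def f_def)
  ultimately show ?thesis
    by (simp add: finite_subset)
qed

lemma infinite_kep_isotropy_iff:
  "infinite (kep_isotropy V A B i) \<longleftrightarrow> (\<forall>d. acts_trivially (kep_edges V A) A B (d, i) \<longrightarrow> d = 0)"
proof (intro iffI allI impI)
  fix d assume "infinite (kep_isotropy V A B i)" and triv: "acts_trivially (kep_edges V A) A B (d, i)"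
  then have "\<not> acts_trivially (kep_edges V A) A B (\<bar>d\<bar>, i) \<or> \<bar>d\<bar> = 0"
    using finite_kep_isotropy_of_period[of V A B "\<bar>d\<bar>" i] by auto
  then show "d = 0"
    using triv acts_trivially_uminus[OF triv] by (cases "d \<ge> 0") simp_all
next
  assume only_zero: "\<forall>d. acts_trivially (kep_edges V A) A B (d, i) \<longrightarrow> d = 0"
  define f where "f k = (\<lambda>mu. if path_in (kep_edges V A) i mu then kep_act A B k mu else [])" for k
  have "inj f"
  proof
    fix k l assume eq: "f k = f l"
    have "\<forall>nu. path_in (kep_edges V A) i nu \<longrightarrow> kep_act A B k nu = kep_act A B l nu"
    proof (intro allI impI)
      fix nu assume "path_in (kep_edges V A) i nu"
      then show "kep_act A B k nu = kep_act A B l nu"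
        using fun_cong[OF eq, of nu] by (simp add: f_def)
    qed
    then have "acts_trivially (kep_edges V A) A B (k - l, i)"
      unfolding acts_trivially_diff_iff .
    then have "k - l = 0"
      using only_zero by blast
    then show "k = l"
      by simp
  qed
  moreover have "kep_isotropy V A B i = range f"
    by (simp add: kep_isotropy_def f_def)
  ultimately show "infinite (kep_isotropy V A B i)"
    using infinite_UNIV_int by (auto dest: finite_imageD)
qed

(* P tests whether a restriction is a unit: acts_trivially for the faithful G_B, a vanishing
   exponent for the non-faithful G_{B,infty}. *)
definition regular_beyond ::
    "edge set \<Rightarrow> (nat \<Rightarrow> nat \<Rightarrow> nat) \<Rightarrow> (nat \<Rightarrow> nat \<Rightarrow> int) \<Rightarrow> (int \<times> nat \<Rightarrow> bool)
      \<Rightarrow> nat \<Rightarrow> int \<Rightarrow> nat \<Rightarrow> bool" where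
  "regular_beyond Ed A B P i k K \<longleftrightarrow>
     (\<forall>mu. path_in Ed i mu \<and> kep_act A B k mu = mu \<and> K \<le> length mu \<longrightarrow> P (kep_restr A B k i mu))"

lemma kep_regular_iff:
  "kep_regular V A B \<longleftrightarrow>
     (\<forall>i\<in>V. \<forall>k. \<exists>K. regular_beyond (kep_edges V A) A B (acts_trivially (kep_edges V A) A B) i k K)"
  by (simp add: kep_regular_def regular_beyond_def)

lemma inf_regular_iff:
  "inf_regular N A B \<longleftrightarrow>
     (\<forall>i\<in>V_inf N A B. \<forall>k. \<exists>K. regular_beyond (edges_inf N A B) A B (\<lambda>g. fst g = 0) i k K)"
  by (simp add: inf_regular_def regular_beyond_def)

lemma regular_beyond_Nil: "regular_beyond Ed A B P i k 0 \<Longrightarrow> P (k, i)"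
  unfolding regular_beyond_def by (drule spec[of _ "[]"]) simp

lemma regular_beyond_exponent_zero:
  "regular_beyond (kep_edges V A) A B (acts_trivially (kep_edges V A) A B) i 0 K"
  unfolding regular_beyond_def
  using kep_restr_zero[OF path_in_edges] by (blast intro: acts_trivially_zero)

lemma regular_beyond_mono:
  "regular_beyond Ed A B P i k K \<Longrightarrow> K \<le> K' \<Longrightarrow> regular_beyond Ed A B P i k K'"
  by (auto simp: regular_beyond_def)

lemma regular_beyond_Cons:
  assumes "(i, j, m) \<in> Ed" and "nat ((k * B i j + int m) mod int (A i j)) = m"
    and "regular_beyond Ed A B P i k (Suc n)"
  shows "regular_beyond Ed A B P j ((k * B i j + int m) div int (A i j)) n"
  unfolding regular_beyond_def
proof (intro allI impI)
  fix mu assume "path_in Ed j mu \<and> kep_act A B ((k * B i j + int m) div int (A i j)) mu = mu \<and> n \<le> length mu"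
  then have "path_in Ed i ((i, j, m) # mu) \<and> kep_act A B k ((i, j, m) # mu) = (i, j, m) # mu
      \<and> Suc n \<le> length ((i, j, m) # mu)"
    using assms(1,2) by (simp add: path_in_Cons)
  then show "P (kep_restr A B ((k * B i j + int m) div int (A i j)) j mu)"
    using assms(3) unfolding regular_beyond_def by fastforce
qed

lemma finite_uniform_bound:
  fixes P :: "'a \<Rightarrow> nat \<Rightarrow> bool"
  assumes "finite S" and "\<And>x K K'. P x K \<Longrightarrow> K \<le> K' \<Longrightarrow> P x K'" and "\<And>x. x \<in> S \<Longrightarrow> \<exists>K. P x K"
  shows "\<exists>K. \<forall>x\<in>S. P x K"
proof -
  have "\<forall>x\<in>S. eventually (P x) sequentially"
    using assms(2,3) by (metis eventually_sequentially)
  then have "eventually (\<lambda>K. \<forall>x\<in>S. P x K) sequentially"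
    by (rule eventually_ball_finite[OF assms(1)])
  then show ?thesis
    by (auto simp: eventually_sequentially)
qed

locale katsura_data =
  fixes N :: nat and A :: "nat \<Rightarrow> nat \<Rightarrow> nat" and B :: "nat \<Rightarrow> nat \<Rightarrow> int"
begin

abbreviation "E \<equiv> kep_edges {1..N} A"
abbreviation "Vinf \<equiv> V_inf N A B"
abbreviation "Vfin \<equiv> V_fin N A B"
abbreviation "Einf \<equiv> edges_inf N A B"
abbreviation "Afin \<equiv> A_fin N A B"
abbreviation "Bfin \<equiv> B_fin N A B"
abbreviation "Efin \<equiv> kep_edges Vfin Afin"
abbreviation "trivial \<equiv> acts_trivially E A B"
abbreviation "trivial_fin \<equiv> acts_trivially Efin Afin Bfin"

lemma V_inf_iff: "j \<in> Vinf \<longleftrightarrow> j \<in> {1..N} \<and> (\<forall>d. trivial (d, j) \<longrightarrow> d = 0)"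
  by (simp add: V_inf_def infinite_kep_isotropy_iff)

lemma V_fin_iff: "j \<in> Vfin \<longleftrightarrow> j \<in> {1..N} \<and> (\<exists>d>0. trivial (d, j))"
proof -
  have "(\<exists>d. d \<noteq> 0 \<and> trivial (d, j)) \<longleftrightarrow> (\<exists>d>0. trivial (d, j))"
    using acts_trivially_uminus by (metis neg_0_less_iff_less linorder_neqE_linordered_idom less_irrefl)
  then show ?thesis
    by (auto simp: V_fin_def V_inf_iff)
qed

lemma V_fin_closed:
  assumes a: "a \<in> Vfin" and edge: "(a, b, m) \<in> E" and "B a b \<noteq> 0"
  shows "b \<in> Vfin"
proof -
  obtain d where "d > 0" and triv: "trivial (d, a)"
    using a V_fin_iff by blast
  define q where "q = (d * B a b + int m) div int (A a b)"
  have path: "path_in E a [(a, b, m)]"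
    using edge by (simp add: path_in_Cons)
  then have "kep_act A B d [(a, b, m)] = [(a, b, m)]"
    using triv by (simp add: acts_trivially_def del: kep_act.simps)
  moreover have "(d * B a b + int m) mod int (A a b) \<ge> 0"
    using edge by (simp add: kep_edges_def)
  ultimately have "(d * B a b + int m) mod int (A a b) = int m"
    by (simp add: nat_eq_iff)
  then have "d * B a b = q * int (A a b)"
    unfolding q_def by (metis add_right_cancel div_mult_mod_eq)
  then have "q \<noteq> 0"
    using \<open>d > 0\<close> \<open>B a b \<noteq> 0\<close> by auto
  moreover have "trivial (q, b)"
    using acts_trivially_restr[OF triv path] by (simp add: q_def)
  moreover have "b \<in> {1..N}"
    using edge by (simp add: kep_edges_def)
  ultimately show ?thesis
    by (auto simp: V_fin_def V_inf_iff)
qed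

lemma Efin_subset: "Efin \<subseteq> E"
  by (auto simp: kep_edges_def A_fin_def V_fin_def split: if_splits)

lemma Efin_coeffs: "(a, b, m) \<in> Efin \<Longrightarrow> Afin a b = A a b \<and> Bfin a b = B a b"
  by (simp add: kep_edges_def A_fin_def B_fin_def split: if_splits)

lemma path_in_Efin:
  assumes "path_in E j mu" and "j \<in> Vfin" and "\<forall>(a, b, m)\<in>set mu. B a b \<noteq> 0"
  shows "path_in Efin j mu"
  using assms
proof (induction mu arbitrary: j)
  case (Cons e mu)
  obtain b m where e: "e = (j, b, m)" and edge: "(j, b, m) \<in> E" and mu: "path_in E b mu"
    using Cons.prems(1) by (auto elim: path_in_ConsE)
  have "B j b \<noteq> 0"
    using Cons.prems(3) e by auto
  then have "b \<in> Vfin"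
    using V_fin_closed[OF Cons.prems(2) edge] by blast
  then have "(j, b, m) \<in> Efin"
    using edge Cons.prems(2) \<open>B j b \<noteq> 0\<close> by (simp add: kep_edges_def A_fin_def)
  then show ?case
    using Cons.IH[OF mu \<open>b \<in> Vfin\<close>] Cons.prems(3) e by (simp add: path_in_Cons)
qed simp

lemma kep_act_fin: "set mu \<subseteq> Efin \<Longrightarrow> kep_act Afin Bfin k mu = kep_act A B k mu"
  by (rule kep_act_cong) (use Efin_coeffs in blast)

lemma kep_restr_fin: "set mu \<subseteq> Efin \<Longrightarrow> kep_restr Afin Bfin k v mu = kep_restr A B k v mu"
  by (rule kep_restr_cong) (use Efin_coeffs in blast)

lemma acts_trivially_fin_of_full: "trivial g \<Longrightarrow> trivial_fin g"
  unfolding acts_trivially_def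
proof (intro allI impI)
  fix nu assume triv: "\<forall>nu. path_in E (snd g) nu \<longrightarrow> kep_act A B (fst g) nu = nu"
    and nu: "path_in Efin (snd g) nu"
  then have "kep_act A B (fst g) nu = nu"
    using path_in_mono[OF nu Efin_subset] by blast
  then show "kep_act Afin Bfin (fst g) nu = nu"
    using kep_act_fin[OF path_in_edges[OF nu]] by simp
qed

lemma acts_trivially_full_of_fin:
  assumes "snd g \<in> Vfin" and "trivial_fin g"
  shows "trivial g"
proof -
  have "kep_act A B k nu = nu" if "path_in E j nu" and "j \<in> Vfin" and "trivial_fin (k, j)" for j k nu
    using that
  proof (induction nu arbitrary: j k)
    case (Cons e nu)
    obtain b m where e: "e = (j, b, m)" and edge: "(j, b, m) \<in> E" and nu: "path_in E b nu"
      using Cons.prems(1) by (auto elim: path_in_ConsE)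
    have m: "m < A j b"
      using edge by (simp add: kep_edges_def)
    show ?case
    proof (cases "B j b = 0")
      case True
      then show ?thesis
        using e m kep_act_zero[OF path_in_edges[OF nu]] by simp
    next
      case False
      then have "b \<in> Vfin"
        using V_fin_closed[OF Cons.prems(2) edge] by blast
      then have edge_fin: "(j, b, m) \<in> Efin"
        using edge Cons.prems(2) False by (simp add: kep_edges_def A_fin_def)
      then have path: "path_in Efin j [(j, b, m)]"
        by (simp add: path_in_Cons)
      have coeffs: "Afin j b = A j b" "Bfin j b = B j b"
        using Efin_coeffs[OF edge_fin] by simp_all
      have "kep_act Afin Bfin k [(j, b, m)] = [(j, b, m)]"
        using Cons.prems(3) path by (simp add: acts_trivially_def del: kep_act.simps)
      moreover have "trivial_fin ((k * B j b + int m) div int (A j b), b)"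
        using acts_trivially_restr[OF Cons.prems(3) path] coeffs by simp
      ultimately show ?thesis
        using Cons.IH[OF nu \<open>b \<in> Vfin\<close>] e coeffs by simp
    qed
  qed simp
  then show ?thesis
    using assms by (auto simp: acts_trivially_def)
qed

lemma regular_beyond_inf_of_full:
  assumes "i \<in> Vinf" and "regular_beyond E A B trivial i k K"
  shows "regular_beyond Einf A B (\<lambda>g. fst g = 0) i k K"
  unfolding regular_beyond_def
proof (intro allI impI)
  fix mu assume mu: "path_in Einf i mu \<and> kep_act A B k mu = mu \<and> K \<le> length mu"
  have "Einf \<subseteq> E"
    by (auto simp: edges_inf_def)
  then have "trivial (kep_restr A B k i mu)"
    using assms(2) mu path_in_mono unfolding regular_beyond_def by blast
  moreover have "snd (kep_restr A B k i mu) \<in> Vinf"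
    using mu assms(1) by (intro kep_restr_target_in) (auto simp: edges_inf_def)
  ultimately show "fst (kep_restr A B k i mu) = 0"
    using V_inf_iff by (metis prod.collapse)
qed

lemma regular_beyond_fin_of_full:
  assumes "regular_beyond E A B trivial i k K"
  shows "regular_beyond Efin Afin Bfin trivial_fin i k K"
  unfolding regular_beyond_def
proof (intro allI impI)
  fix mu assume mu: "path_in Efin i mu \<and> kep_act Afin Bfin k mu = mu \<and> K \<le> length mu"
  then have "set mu \<subseteq> Efin"
    using path_in_edges by blast
  then have "path_in E i mu \<and> kep_act A B k mu = mu \<and> K \<le> length mu"
    using mu path_in_mono[OF _ Efin_subset] kep_act_fin by auto
  then have "trivial (kep_restr A B k i mu)"
    using assms unfolding regular_beyond_def by blast
  then show "trivial_fin (kep_restr Afin Bfin k i mu)"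
    using kep_restr_fin[OF \<open>set mu \<subseteq> Efin\<close>] acts_trivially_fin_of_full by simp
qed

lemma regular_beyond_of_residues:
  assumes j: "j \<in> Vfin" and "d > 0" and period: "trivial (d, j)"
    and residues: "\<And>r. r \<in> {0..<d} \<Longrightarrow> regular_beyond Efin Afin Bfin trivial_fin j r K"
  shows "regular_beyond E A B trivial j k K"
  unfolding regular_beyond_def
proof (intro allI impI)
  fix mu assume mu: "path_in E j mu \<and> kep_act A B k mu = mu \<and> K \<le> length mu"
  then have edges: "set mu \<subseteq> E"
    using path_in_edges by blast
  show "trivial (kep_restr A B k j mu)"
  proof (cases "\<forall>(a, b, m)\<in>set mu. B a b \<noteq> 0")
    case False
    then obtain a b m where "(a, b, m) \<in> set mu" and "B a b = 0"
      by auto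
    then show ?thesis
      using kep_restr_zero_if_B_zero[OF edges] by (simp add: acts_trivially_zero)
  next
    case True
    then have path_fin: "path_in Efin j mu"
      using path_in_Efin mu j by blast
    define r where "r = k mod d"
    define t where "t = k div d"
    have k: "k = r + d * t"
      by (simp add: r_def t_def)
    have triv_t: "trivial (d * t, j)"
      using period by (rule acts_trivially_mult)
    then have fixed_t: "kep_act A B (d * t) mu = mu"
      using mu by (simp add: acts_trivially_def)
    then have "kep_act A B r mu = mu"
      using mu k kep_act_add[OF edges, of B r "d * t"] by simp
    then have "kep_act Afin Bfin r mu = mu"
      using kep_act_fin[OF path_in_edges[OF path_fin]] by simp
    moreover have "r \<in> {0..<d}"
      using \<open>d > 0\<close> by (simp add: r_def)
    ultimately have "trivial_fin (kep_restr Afin Bfin r j mu)"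
      using residues path_fin mu unfolding regular_beyond_def by blast
    moreover have "snd (kep_restr A B r j mu) \<in> Vfin"
      using path_fin j by (rule kep_restr_target_in) (simp add: kep_edges_def)
    ultimately have "trivial (kep_restr A B r j mu)"
      using acts_trivially_full_of_fin kep_restr_fin[OF path_in_edges[OF path_fin]] by simp
    moreover have "trivial (kep_restr A B (d * t) j mu)"
      using acts_trivially_restr[OF triv_t] mu by blast
    ultimately show ?thesis
      using acts_trivially_restr_add[OF edges fixed_t] k by simp
  qed
qed

lemma regular_beyond_V_fin_uniform:
  assumes "kep_regular Vfin Afin Bfin"
  obtains K where "\<And>j k. j \<in> Vfin \<Longrightarrow> regular_beyond E A B trivial j k K"
proof -
  have "\<exists>D. \<forall>j\<in>Vfin. D j > 0 \<and> trivial (D j, j)"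
  proof (rule bchoice, intro ballI)
    show "\<exists>d. d > 0 \<and> trivial (d, j)" if "j \<in> Vfin" for j
      using that unfolding V_fin_iff by blast
  qed
  then obtain D where D: "\<And>j. j \<in> Vfin \<Longrightarrow> D j > 0 \<and> trivial (D j, j)"
    by blast
  define S where "S = (SIGMA j:Vfin. {0..<D j})"
  have "finite Vfin"
    by (rule finite_subset[of _ "{1..N}"]) (auto simp: V_fin_def)
  then have "finite S"
    by (simp add: S_def)
  then have "\<exists>K. \<forall>x\<in>S. (\<lambda>(j, r). regular_beyond Efin Afin Bfin trivial_fin j r) x K"
  proof (rule finite_uniform_bound)
    show "(\<lambda>(j, r). regular_beyond Efin Afin Bfin trivial_fin j r) x K'"
      if "(\<lambda>(j, r). regular_beyond Efin Afin Bfin trivial_fin j r) x K" and "K \<le> K'" for x K K'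
      using that regular_beyond_mono by (cases x) simp
    show "\<exists>K. (\<lambda>(j, r). regular_beyond Efin Afin Bfin trivial_fin j r) x K" if "x \<in> S" for x
      using that assms unfolding kep_regular_iff S_def by auto
  qed
  then obtain K where K: "\<And>j r. (j, r) \<in> S \<Longrightarrow> regular_beyond Efin Afin Bfin trivial_fin j r K"
    by auto
  show thesis
  proof (rule that)
    fix j k assume j: "j \<in> Vfin"
    show "regular_beyond E A B trivial j k K"
      using D[OF j] K by (intro regular_beyond_of_residues[OF j]) (auto simp: S_def j)
  qed
qed

lemma regular_beyond_V_inf:
  assumes fin: "\<And>j k. j \<in> Vfin \<Longrightarrow> regular_beyond E A B trivial j k Kf"
  shows "i \<in> Vinf \<Longrightarrow> regular_beyond Einf A B (\<lambda>g. fst g = 0) i k n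
    \<Longrightarrow> regular_beyond E A B trivial i k (n + Kf)"
proof (induction n arbitrary: i k)
  case 0
  then have "k = 0"
    by (auto dest: regular_beyond_Nil)
  then show ?case
    by (simp add: regular_beyond_exponent_zero)
next
  case (Suc n)
  show ?case
    unfolding regular_beyond_def
  proof (intro allI impI)
    fix mu assume mu: "path_in E i mu \<and> kep_act A B k mu = mu \<and> Suc n + Kf \<le> length mu"
    then obtain b m mu' where mu_eq: "mu = (i, b, m) # mu'" and edge: "(i, b, m) \<in> E"
      and path: "path_in E b mu'"
      by (auto elim: path_in_ConsE)
    define q where "q = (k * B i b + int m) div int (A i b)"
    have fixed_e: "nat ((k * B i b + int m) mod int (A i b)) = m"
      and fixed_mu': "kep_act A B q mu' = mu'"
      using mu by (simp_all add: mu_eq q_def)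
    have restr: "kep_restr A B k i mu = kep_restr A B q b mu'"
      by (simp add: mu_eq q_def)
    have "b \<in> {1..N}"
      using edge by (simp add: kep_edges_def)
    then consider (B_zero) "B i b = 0" | (fin) "b \<in> Vfin" | (inf) "B i b \<noteq> 0" "b \<in> Vinf"
      by (auto simp: V_fin_def)
    then show "trivial (kep_restr A B k i mu)"
    proof cases
      case B_zero
      have "set mu \<subseteq> E"
        using mu path_in_edges by blast
      then show ?thesis
        using kep_restr_zero_if_B_zero[of mu _ A i b m B k i] B_zero
        by (simp add: mu_eq acts_trivially_zero)
    next
      case fin
      then show ?thesis
        using assms(1)[OF fin] path fixed_mu' mu restr unfolding regular_beyond_def mu_eq by simp
    next
      case inf
      then have "(i, b, m) \<in> Einf"
        using edge by (simp add: edges_inf_def)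
      then have "regular_beyond Einf A B (\<lambda>g. fst g = 0) b q n"
        unfolding q_def using fixed_e Suc.prems(2) by (rule regular_beyond_Cons)
      then have "regular_beyond E A B trivial b q (n + Kf)"
        by (rule Suc.IH[OF inf(2)])
      then show ?thesis
        using path fixed_mu' mu restr unfolding regular_beyond_def mu_eq by simp
    qed
  qed
qed

lemma inf_regular_of_kep_regular: "kep_regular {1..N} A B \<Longrightarrow> inf_regular N A B"
  unfolding kep_regular_iff inf_regular_iff
  using regular_beyond_inf_of_full by (fastforce simp: V_inf_def)

lemma kep_regular_fin_of_kep_regular: "kep_regular {1..N} A B \<Longrightarrow> kep_regular Vfin Afin Bfin"
  unfolding kep_regular_iff
  using regular_beyond_fin_of_full by (fastforce simp: V_fin_def)

lemma kep_regular_of_regular_parts: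
  assumes "inf_regular N A B" and "kep_regular Vfin Afin Bfin"
  shows "kep_regular {1..N} A B"
proof -
  obtain Kf where Kf: "\<And>j k. j \<in> Vfin \<Longrightarrow> regular_beyond E A B trivial j k Kf"
    using regular_beyond_V_fin_uniform[OF assms(2)] by blast
  show ?thesis
    unfolding kep_regular_iff
  proof (intro ballI allI)
    fix i k assume "i \<in> {1..N}"
    show "\<exists>K. regular_beyond E A B trivial i k K"
    proof (cases "i \<in> Vfin")
      case True
      then show ?thesis using Kf by blast
    next
      case False
      with \<open>i \<in> {1..N}\<close> have "i \<in> Vinf"
        by (simp add: V_fin_def)
      moreover obtain n where "regular_beyond Einf A B (\<lambda>g. fst g = 0) i k n"
        using assms(1) calculation unfolding inf_regular_iff by blast
      ultimately show ?thesis
        using regular_beyond_V_inf[OF Kf] by blast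
    qed
  qed
qed

end

theorem proposition3p5:
  fixes N :: nat and A :: "nat \<Rightarrow> nat \<Rightarrow> nat" and B :: "nat \<Rightarrow> nat \<Rightarrow> int"
  assumes "katsura_pair N A B"
  shows "kep_regular {1..N} A B \<longleftrightarrow>
           (inf_regular N A B \<and> kep_regular (V_fin N A B) (A_fin N A B) (B_fin N A B))"
  using katsura_data.inf_regular_of_kep_regular katsura_data.kep_regular_fin_of_kep_regular
    katsura_data.kep_regular_of_regular_parts
  by blast

end
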